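(* Let $n\ge2$, $\varepsilon\in\mathbb{Z}/2\mathbb{Z}$, $\nu\in\mathbb{C}$ with $\operatorname{Re}\nu>n/2-1$, and $f\in W^{\infty}_{-\nu,\varepsilon}$. Regard $f$ as a function on $\mathbb{R}^{n-1}$ via $x\mapsto f(u(x))$, where $u(x)$ is the $n\times n$ matrix equal to the identity except that its first row is $(1,x_{n-1},\dots,x_1)$, and regard $I_\nu f\in\widetilde W^\infty_{\nu,\varepsilon}$ as a function on $\mathbb{R}^{n-1}$ via $y\mapsto (I_\nu f)(\widetilde u(y))$, where $\widetilde u(y)$ is the identity matrix except that its last column is $(-y_1,\dots,-y_{n-1},1)^T$. Then \[ (I_\nu f)(\widetilde u(y))=\int_{z\in\mathbb{R}^{n-1}}f(u(z))\,\Big|\sum_{j=2}^{n-1}y_jz_{n+1-j}-y_1-z_1\Big|^{\nu-n/2}\operatorname{sgn}\Big(\sum_{j=2}^{n-1}y_jz_{n+1-j}-y_1-z_1\Big)^{\varepsilon}dz . \]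
   Context: Let $G=GL(n,\mathbb{R})$ and $w_{\mathrm{long}}$ the $n\times n$ antidiagonal permutation matrix. Let $P\subset G$ be the group of matrices with first row $(a,0,\dots,0)$, $a\in\mathbb{R}^*$, and lower right block $B\in GL(n-1,\mathbb{R})$; $\widetilde P$ the group of matrices with last column $(0,\dots,0,a)^T$ and upper left block $B\in GL(n-1,\mathbb{R})$. Let $U=\{u(x):x\in\mathbb{R}^{n-1}\}$ with Haar measure $du=dx$ (Lebesgue). For $\mu\in\mathbb{C}$, $W^\infty_{\mu,\varepsilon}$ is the space of smooth $f$ on $G$ with $f(gp)=|a|^{-(n-1)(\mu-n/2)/n}\operatorname{sgn}(a)^\varepsilon|\det B|^{(\mu-n/2)/n}f(g)$ for $p\in P$, and $\widetilde W^\infty_{\mu,\varepsilon}$ the space of smooth $f$ with $f(g\tilde p)=|\det B|^{-(\mu-n/2)/n}|a|^{(n-1)(\mu-n/2)/n}\operatorname{sgn}(a)^\varepsilon f(g)$ for $\tilde p\in\widetilde P$. The standard intertwining operator $I_\nu:W^\infty_{-\nu,\varepsilon}\to\widetilde W^\infty_{\nu,\varepsilon}$ is $(I_\nu f)(g)=\int_U f(g\,w_{\mathrm{long}}\,u)\,du$. *)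

theory Defs
  imports "HOL-Analysis.Analysis"
begin

text \<open>Matrices in GL(n,R) are elements of real^'n^'n, where 'n is a finite linearly
ordered index type with CARD('n) = n; the index i corresponds to the row/column
number pos i in {1..n}.\<close>

definition pos :: "'n::{finite,linorder} \<Rightarrow> nat" where
  "pos i = card {j. j < i} + 1"

definition GLset :: "(real^'n^'n) set" where
  "GLset = {M. invertible M}"

text \<open>C-infinity on a set S: f lies in a family of continuous functions closed under
taking directional (partial) derivatives along the standard basis directions.\<close>
definition smooth_on :: "('a::euclidean_space) set \<Rightarrow> ('a \<Rightarrow> complex) \<Rightarrow> bool" where
  "smooth_on S f \<longleftrightarrow> (\<exists>F. f \<in> F \<and> (\<forall>g\<in>F. continuous_on S g \<and>
      (\<forall>v\<in>Basis. \<exists>g'\<in>F. \<forall>x\<in>S.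
          ((\<lambda>t. g (x + t *\<^sub>R v)) has_vector_derivative g' x) (at 0))))"

definition a_entry :: "((real, 'n::{finite,linorder}) vec, 'n) vec \<Rightarrow> real" where
  "a_entry p = p $ Min UNIV $ Min UNIV"

definition block_det :: "'n::{finite,linorder} set \<Rightarrow> ((real, 'n) vec, 'n) vec \<Rightarrow> real" where
  "block_det S M = (\<Sum>\<sigma> | \<sigma> permutes S. of_int (sign \<sigma>) * (\<Prod>i\<in>S. M $ i $ \<sigma> i))"

definition lowerB_det :: "((real, 'n::{finite,linorder}) vec, 'n) vec \<Rightarrow> real" where
  "lowerB_det p = block_det {i::'n. pos i \<ge> 2} p"

definition upperB_det :: "((real, 'n::{finite,linorder}) vec, 'n) vec \<Rightarrow> real" where
  "upperB_det p = block_det {i::'n. pos i \<le> CARD('n) - 1} p"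

definition last_entry :: "((real, 'n::{finite,linorder}) vec, 'n) vec \<Rightarrow> real" where
  "last_entry p = p $ Max UNIV $ Max UNIV"

definition Pgrp :: "(((real, 'n::{finite,linorder}) vec, 'n) vec) set" where
  "Pgrp = {p. (\<forall>i j. pos i = 1 \<and> pos j \<ge> 2 \<longrightarrow> p $ i $ j = 0)
              \<and> a_entry p \<noteq> 0 \<and> lowerB_det p \<noteq> 0}"

definition Ptgrp :: "(((real, 'n::{finite,linorder}) vec, 'n) vec) set" where
  "Ptgrp = {p. (\<forall>i j. pos j = CARD('n) \<and> pos i \<le> CARD('n) - 1 \<longrightarrow> p $ i $ j = 0)
              \<and> last_entry p \<noteq> 0 \<and> upperB_det p \<noteq> 0}"

definition rpow :: "real \<Rightarrow> complex \<Rightarrow> complex" where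
  "rpow x s = complex_of_real x powr s"

definition Wspace :: "complex \<Rightarrow> nat \<Rightarrow> (((real, 'n::{finite,linorder}) vec, 'n) vec \<Rightarrow> complex) set" where
  "Wspace \<mu> \<epsilon> = {f. smooth_on GLset f \<and>
     (\<forall>g\<in>GLset. \<forall>p\<in>Pgrp. f (g ** p) =
        rpow \<bar>a_entry p\<bar> (- (of_nat (CARD('n) - 1)) * (\<mu> - of_nat CARD('n) / 2) / of_nat CARD('n))
        * of_real (sgn (a_entry p) ^ \<epsilon>)
        * rpow \<bar>lowerB_det p\<bar> ((\<mu> - of_nat CARD('n) / 2) / of_nat CARD('n)) * f g)}"

definition Wtspace :: "complex \<Rightarrow> nat \<Rightarrow> (((real, 'n::{finite,linorder}) vec, 'n) vec \<Rightarrow> complex) set" where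
  "Wtspace \<mu> \<epsilon> = {f. smooth_on GLset f \<and>
     (\<forall>g\<in>GLset. \<forall>p\<in>Ptgrp. f (g ** p) =
        rpow \<bar>upperB_det p\<bar> (- (\<mu> - of_nat CARD('n) / 2) / of_nat CARD('n))
        * rpow \<bar>last_entry p\<bar> (of_nat (CARD('n) - 1) * (\<mu> - of_nat CARD('n) / 2) / of_nat CARD('n))
        * of_real (sgn (last_entry p) ^ \<epsilon>) * f g)}"

definition wlong :: "((real, 'n::{finite,linorder}) vec, 'n) vec" where
  "wlong = (\<chi> i j. if pos i + pos j = CARD('n) + 1 then 1 else 0)"

definition umat :: "(nat \<Rightarrow> real) \<Rightarrow> ((real, 'n::{finite,linorder}) vec, 'n) vec" where
  "umat x = (\<chi> i j. if i = j then 1 else if pos i = 1 then x (CARD('n) + 1 - pos j) else 0)"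

definition utmat :: "(nat \<Rightarrow> real) \<Rightarrow> ((real, 'n::{finite,linorder}) vec, 'n) vec" where
  "utmat y = (\<chi> i j. if i = j then 1 else if pos j = CARD('n) then - y (pos i) else 0)"

definition Leb :: "nat \<Rightarrow> (nat \<Rightarrow> real) measure" where
  "Leb m = PiM {1..m} (\<lambda>_. lborel)"

definition Iop :: "complex \<Rightarrow> (((real, 'n::{finite,linorder}) vec, 'n) vec \<Rightarrow> complex) \<Rightarrow> ((real, 'n) vec, 'n) vec \<Rightarrow> complex" where
  "Iop \<nu> f g = (LINT x | Leb (CARD('n) - 1). f (g ** wlong ** umat x))"

end

theory Submission
  imports Defs
begin

text \<open>For x1 \<noteq> 0 the Bruhat decomposition reads u~(y) w u(x) = u(z) p with p \<in> P, a(p) = -1/x1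
  and |det B(p)| = |x1|, where z is an explicit rational function of x and y, and
  a(p) = \<Sum> y_j z_(n+1-j) - y_1 - z_1. The P-equivariance of f therefore turns f(u~(y) w u(x)) into
  |x1|^-n times the integrand on the right at z. The map x \<mapsto> z has Jacobian |x1|^-n: for fixed
  x1 = t it rescales the other n - 2 coordinates by -1/t, and then shifts z_1 by 1/t, which after the
  substitution t \<mapsto> 1/t contributes the remaining factor t^-2.\<close>

section \<open>A change of variables on R^(n-1)\<close>

lemma has_integral_indicator_box_inverse:
  fixes l u :: real
  assumes "l \<le> u"
  shows "((\<lambda>x. (inverse x)\<^sup>2 * indicator (box l u) (inverse x)) has_integral (u - l)) (-{0})"
proof -
  let ?S = "-{0::real}"
  have deriv: "\<And>x. x \<in> ?S \<Longrightarrow> (inverse has_field_derivative (- (inverse x ^ 2))) (at x within ?S)"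
    using DERIV_inverse by (auto intro: has_field_derivative_at_within simp: power2_eq_square)
  have inj: "inj_on inverse ?S" by (auto intro: inj_onI)
  have img: "inverse ` ?S = ?S"
  proof
    show "?S \<subseteq> inverse ` ?S"
    proof
      fix x :: real assume "x \<in> ?S" then show "x \<in> inverse ` ?S"
        by (intro image_eqI[of _ _ "inverse x"]) auto
    qed
  qed auto
  have "((\<lambda>x. 1::real) has_integral (u - l)) (box l u)"
    using has_integral_measure_lborel[of "box l u"] assms by (simp add: emeasure_lborel_box_eq)
  then have "((\<lambda>x. if x \<in> box l u then 1 else 0) has_integral (u - l)) UNIV"
    by (simp only: has_integral_restrict_UNIV)
  moreover have "indicator (box l u) = (\<lambda>x. if x \<in> box l u then 1 else (0::real))"
    by (auto simp: indicator_def)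
  ultimately have "(indicator (box l u) has_integral (u - l)) UNIV" by simp
  then have box: "(indicator (box l u) has_integral (u - l)) ?S"
  proof (subst has_integral_spike_set_eq[where S="?S" and T=UNIV])
    show "negligible {x \<in> UNIV - ?S. indicator (box l u) x \<noteq> (0::real)}"
      by (rule negligible_subset[of "{0}"]) auto
  qed auto
  then have "(indicator (box l u) :: real \<Rightarrow> real) absolutely_integrable_on ?S"
    by (intro nonnegative_absolutely_integrable_1) (auto simp: indicator_def)
  then have "integral ?S (\<lambda>x. \<bar>- (inverse x ^ 2)\<bar> * indicator (box l u) (inverse x)) = u - l
      \<and> (\<lambda>x. \<bar>- (inverse x ^ 2)\<bar> * indicator (box l u) (inverse x)) absolutely_integrable_on ?S"
    using has_absolute_integral_change_of_variables_1'[OF _ deriv inj, of "indicator (box l u)" "u - l"]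
      img box by (simp add: integral_unique)
  then show ?thesis
    by (simp add: has_integral_integrable_integral set_lebesgue_integral_eq_integral(1))
qed

lemma lborel_distr_inverse:
  "distr (density lborel (\<lambda>t::real. ennreal ((inverse t)\<^sup>2))) lborel inverse = lborel"
proof (rule lborel_eqI[symmetric])
  fix l u :: real assume "\<And>b. b \<in> Basis \<Longrightarrow> l \<bullet> b \<le> u \<bullet> b"
  then have lu: "l \<le> u" by simp
  have "(inverse::real\<Rightarrow>real) \<in> borel_measurable borel"
    using borel_measurable_inverse[of "\<lambda>x. x" borel] by simp
  then have vimage: "inverse -` box l u \<in> sets (borel::real measure)"
    using measurable_sets[of inverse borel borel "box l u"] by simp
  have "emeasure (distr (density lborel (\<lambda>t::real. ennreal ((inverse t)\<^sup>2))) lborel inverse) (box l u)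
     = emeasure (density lborel (\<lambda>t::real. ennreal ((inverse t)\<^sup>2))) (inverse -` box l u)"
    by (subst emeasure_distr) (auto simp: vimage)
  also have "\<dots> = (\<integral>\<^sup>+ t. ennreal ((inverse t)\<^sup>2) * indicator (inverse -` box l u) t \<partial>lborel)"
    using vimage by (subst emeasure_density) auto
  also have "\<dots> = (\<integral>\<^sup>+ t. ennreal ((inverse t)\<^sup>2 * indicator (box l u) (inverse t)) * indicator (-{0}) t \<partial>lborel)"
    by (intro nn_integral_cong) (auto simp: indicator_def)
  also have "\<dots> = ennreal (u - l)"
    by (rule nn_integral_has_integral_lebesgue'[OF _ has_integral_indicator_box_inverse[OF lu]]) auto
  finally show "emeasure (distr (density lborel (\<lambda>t::real. ennreal ((inverse t)\<^sup>2))) lborel inverse) (box l u)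
     = (\<Prod>b\<in>Basis. (u - l) \<bullet> b)" by simp
qed simp

lemma nn_integral_lborel_inverse_shift:
  fixes g :: "real \<Rightarrow> ennreal"
  assumes [measurable]: "g \<in> borel_measurable borel"
  shows "(\<integral>\<^sup>+t. ennreal ((inverse t)\<^sup>2) * g (b + inverse t) \<partial>lborel) = (\<integral>\<^sup>+u. g u \<partial>lborel)"
proof -
  have "(\<integral>\<^sup>+u. g u \<partial>lborel) = (\<integral>\<^sup>+u. g (b + u) \<partial>lborel)"
    using nn_integral_real_affine[of g 1 b] by simp
  also have "\<dots> = (\<integral>\<^sup>+u. g (b + u) \<partial>distr (density lborel (\<lambda>t::real. ennreal ((inverse t)\<^sup>2))) lborel inverse)"
    by (simp add: lborel_distr_inverse)
  also have "\<dots> = (\<integral>\<^sup>+t. ennreal ((inverse t)\<^sup>2) * g (b + inverse t) \<partial>lborel)"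
    by (simp add: nn_integral_distr nn_integral_density)
  finally show ?thesis ..
qed

lemma emeasure_lborel_vimage_mult:
  fixes c :: real
  assumes "c \<noteq> 0" and "B \<in> sets borel"
  shows "emeasure lborel ((\<lambda>t. c * t) -` B) = ennreal (inverse \<bar>c\<bar>) * emeasure lborel B"
proof -
  have "emeasure lborel ((\<lambda>t. c * t) -` B) = emeasure (distr lborel borel ((*) c)) B"
    using assms by (subst emeasure_distr) auto
  also have "\<dots> = ennreal (inverse \<bar>c\<bar>) * emeasure lborel B"
    using assms by (simp add: lborel_distr_mult emeasure_density_const)
  finally show ?thesis .
qed

lemma product_sigma_finite_lborel: "product_sigma_finite (\<lambda>_::'i. lborel :: real measure)"
  unfolding product_sigma_finite_def by (auto intro: sigma_finite_lborel)

lemma vimage_PiE_scale_involution: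
  fixes c :: real and \<sigma> :: "'i \<Rightarrow> 'i"
  assumes \<sigma>I: "\<And>k. k \<in> I \<Longrightarrow> \<sigma> k \<in> I" and \<sigma>\<sigma>: "\<And>k. k \<in> I \<Longrightarrow> \<sigma> (\<sigma> k) = k"
  shows "(\<lambda>r. \<lambda>k\<in>I. c * r (\<sigma> k)) -` Pi\<^sub>E I A \<inter> space (PiM I (\<lambda>_. lborel))
    = Pi\<^sub>E I (\<lambda>j. (\<lambda>t. c * t) -` A (\<sigma> j))"
proof (intro equalityI subsetI)
  fix x assume "x \<in> (\<lambda>r. \<lambda>k\<in>I. c * r (\<sigma> k)) -` Pi\<^sub>E I A \<inter> space (PiM I (\<lambda>_. lborel))"
  then show "x \<in> Pi\<^sub>E I (\<lambda>j. (\<lambda>t. c * t) -` A (\<sigma> j))"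
    by (auto simp: space_PiM PiE_iff) (metis \<sigma>I \<sigma>\<sigma>)
next
  fix x assume x: "x \<in> Pi\<^sub>E I (\<lambda>j. (\<lambda>t. c * t) -` A (\<sigma> j))"
  have "c * x (\<sigma> i) \<in> A i" if "i \<in> I" for i
    using x \<sigma>I[OF that] \<sigma>\<sigma>[OF that] by (auto simp: PiE_iff)
  then show "x \<in> (\<lambda>r. \<lambda>k\<in>I. c * r (\<sigma> k)) -` Pi\<^sub>E I A \<inter> space (PiM I (\<lambda>_. lborel))"
    using x by (auto simp: space_PiM PiE_iff)
qed

lemma PiM_lborel_scale_involution:
  fixes I :: "'i set" and c :: real and \<sigma> :: "'i \<Rightarrow> 'i"
  assumes fin: "finite I" and c: "c \<noteq> 0" and \<sigma>I: "\<And>k. k \<in> I \<Longrightarrow> \<sigma> k \<in> I"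
    and \<sigma>\<sigma>: "\<And>k. k \<in> I \<Longrightarrow> \<sigma> (\<sigma> k) = k"
  shows "density (distr (PiM I (\<lambda>_. lborel)) (PiM I (\<lambda>_. lborel)) (\<lambda>r. \<lambda>k\<in>I. c * r (\<sigma> k)))
           (\<lambda>_. ennreal (\<bar>c\<bar> ^ card I)) = PiM I (\<lambda>_. lborel)"
    (is "density (distr ?M ?M ?T) _ = _")
proof (rule product_sigma_finite.PiM_eqI[OF product_sigma_finite_lborel fin])
  have T: "?T \<in> ?M \<rightarrow>\<^sub>M ?M"
    by (rule measurable_restrict) (use \<sigma>I in auto)
  fix A assume A: "\<And>i. i \<in> I \<Longrightarrow> A i \<in> sets (lborel::real measure)"
  have mult_c: "(\<lambda>t::real. c * t) \<in> borel_measurable borel" by measurable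
  have vimage: "(\<lambda>t::real. c * t) -` B \<in> sets borel" if "B \<in> sets borel" for B
    using measurable_sets[OF mult_c that] by simp
  have PA: "Pi\<^sub>E I A \<in> sets ?M"
    using A by (intro sets_PiM_I_finite fin) auto
  have inverse_power: "ennreal (\<bar>c\<bar> ^ card I) * ennreal (inverse \<bar>c\<bar>) ^ card I = 1"
    using c by (simp add: ennreal_power[symmetric] ennreal_mult[symmetric] power_mult_distrib[symmetric])
  have "emeasure (density (distr ?M ?M ?T) (\<lambda>_. ennreal (\<bar>c\<bar> ^ card I))) (Pi\<^sub>E I A)
     = ennreal (\<bar>c\<bar> ^ card I) * emeasure ?M (?T -` Pi\<^sub>E I A \<inter> space ?M)"
    using PA T by (simp add: emeasure_density_const emeasure_distr)
  also have "\<dots> = ennreal (\<bar>c\<bar> ^ card I) * (\<Prod>j\<in>I. emeasure lborel ((\<lambda>t. c * t) -` A (\<sigma> j)))"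
    using A \<sigma>I vimage
    by (simp only: vimage_PiE_scale_involution[OF \<sigma>I \<sigma>\<sigma>],
        subst product_sigma_finite.emeasure_PiM[OF product_sigma_finite_lborel fin]) auto
  also have "\<dots> = ennreal (\<bar>c\<bar> ^ card I) * (\<Prod>j\<in>I. ennreal (inverse \<bar>c\<bar>) * emeasure lborel (A (\<sigma> j)))"
    using A \<sigma>I c by (intro arg_cong2[where f="(*)"] prod.cong refl emeasure_lborel_vimage_mult) auto
  also have "\<dots> = (\<Prod>j\<in>I. emeasure lborel (A (\<sigma> j)))"
    by (simp add: prod.distrib mult.assoc[symmetric] inverse_power)
  also have "\<dots> = (\<Prod>j\<in>I. emeasure lborel (A j))"
    by (rule prod.reindex_bij_witness[where i=\<sigma> and j=\<sigma>]) (use \<sigma>I \<sigma>\<sigma> in auto)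
  finally show "emeasure (density (distr ?M ?M ?T) (\<lambda>_. ennreal (\<bar>c\<bar> ^ card I))) (Pi\<^sub>E I A)
      = (\<Prod>i\<in>I. emeasure lborel (A i))" .
qed simp

lemma nn_integral_PiM_lborel_scale_involution:
  fixes I :: "'i set" and c :: real and \<sigma> :: "'i \<Rightarrow> 'i"
  assumes fin: "finite I" and c: "c \<noteq> 0" and \<sigma>I: "\<And>k. k \<in> I \<Longrightarrow> \<sigma> k \<in> I"
    and \<sigma>\<sigma>: "\<And>k. k \<in> I \<Longrightarrow> \<sigma> (\<sigma> k) = k"
    and [measurable]: "H \<in> borel_measurable (PiM I (\<lambda>_. lborel))"
  shows "ennreal (\<bar>c\<bar> ^ card I) * (\<integral>\<^sup>+r. H (\<lambda>k\<in>I. c * r (\<sigma> k)) \<partial>PiM I (\<lambda>_. lborel))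
     = (\<integral>\<^sup>+r. H r \<partial>PiM I (\<lambda>_. lborel))"
proof -
  have [measurable]: "(\<lambda>r. \<lambda>k\<in>I. c * r (\<sigma> k)) \<in> PiM I (\<lambda>_. lborel) \<rightarrow>\<^sub>M PiM I (\<lambda>_. lborel)"
    by (rule measurable_restrict) (use \<sigma>I in auto)
  have "(\<integral>\<^sup>+r. H r \<partial>PiM I (\<lambda>_. lborel)) = (\<integral>\<^sup>+r. H r \<partial>density
      (distr (PiM I (\<lambda>_. lborel)) (PiM I (\<lambda>_. lborel)) (\<lambda>r. \<lambda>k\<in>I. c * r (\<sigma> k))) (\<lambda>_. ennreal (\<bar>c\<bar> ^ card I)))"
    by (simp add: PiM_lborel_scale_involution[OF fin c \<sigma>I \<sigma>\<sigma>])
  also have "\<dots> = ennreal (\<bar>c\<bar> ^ card I) * (\<integral>\<^sup>+r. H (\<lambda>k\<in>I. c * r (\<sigma> k)) \<partial>PiM I (\<lambda>_. lborel))"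
    by (simp add: nn_integral_density nn_integral_distr nn_integral_cmult)
  finally show ?thesis ..
qed

lemma measurable_component_lborel:
  "j \<in> I \<Longrightarrow> (\<lambda>x. x j) \<in> borel_measurable (PiM I (\<lambda>_. lborel :: real measure))"
  by simp

text \<open>For m = n - 1 this is the z with u~(y) w u(x) = u(z) p, p in P, see
  \<open>utmat_wlong_umat_factorization\<close>.\<close>
definition bruhat_coord :: "nat \<Rightarrow> (nat \<Rightarrow> real) \<Rightarrow> (nat \<Rightarrow> real) \<Rightarrow> nat \<Rightarrow> real" where
  "bruhat_coord m y x = (\<lambda>k\<in>{1..m}.
     if k = 1 then (\<Sum>j=2..m. y j * (- inverse (x 1) * x j)) - y 1 + inverse (x 1)
     else - inverse (x 1) * x (m + 2 - k))"

text \<open>On the slice x1 = t, \<open>bruhat_coord\<close> scales the coordinates 2..m by -1/t and reverses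
  them, and then applies this shear with v = 1/t.\<close>
definition first_coord_shift :: "nat \<Rightarrow> (nat \<Rightarrow> real) \<Rightarrow> real \<Rightarrow> (nat \<Rightarrow> real) \<Rightarrow> nat \<Rightarrow> real" where
  "first_coord_shift m y v s = (\<lambda>k\<in>{1..m}. if k = 1 then (\<Sum>j=2..m. y j * s (m + 2 - j)) - y 1 + v else s k)"

lemma bruhat_coord_measurable:
  "bruhat_coord m y \<in> PiM {1..m} (\<lambda>_. lborel) \<rightarrow>\<^sub>M PiM {1..m} (\<lambda>_. lborel)"
  unfolding bruhat_coord_def
proof (rule measurable_restrict)
  fix k assume k: "k \<in> {1..m}"
  have "(\<lambda>x. (\<Sum>j=2..m. y j * (- inverse (x 1) * x j)) - y 1 + inverse (x 1))
      \<in> borel_measurable (PiM {1..m} (\<lambda>_. lborel))"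
    using k by (intro borel_measurable_add borel_measurable_diff borel_measurable_sum borel_measurable_times
        borel_measurable_uminus borel_measurable_inverse measurable_component_lborel borel_measurable_const) auto
  moreover have "(\<lambda>x. - inverse (x 1) * x (m + 2 - k))
      \<in> borel_measurable (PiM {1..m} (\<lambda>_. lborel :: real measure))" if "k \<noteq> 1"
    by (intro borel_measurable_times borel_measurable_uminus borel_measurable_inverse
        measurable_component_lborel) (use k that in auto)
  ultimately show "(\<lambda>x. if k = 1 then (\<Sum>j=2..m. y j * (- inverse (x 1) * x j)) - y 1 + inverse (x 1)
      else - inverse (x 1) * x (m + 2 - k)) \<in> PiM {1..m} (\<lambda>_. lborel) \<rightarrow>\<^sub>M lborel"
    by (cases "k = 1") (simp_all add: measurable_lborel2)
qed

lemma first_coord_shift_measurable: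
  assumes J: "{2..m} \<subseteq> J" and v: "v \<in> borel_measurable (PiM J (\<lambda>_. lborel))"
  shows "(\<lambda>x. first_coord_shift m y (v x) x) \<in> PiM J (\<lambda>_. lborel) \<rightarrow>\<^sub>M PiM {1..m} (\<lambda>_. lborel)"
  unfolding first_coord_shift_def
proof (rule measurable_restrict)
  fix k assume k: "k \<in> {1..m}"
  have "m + 2 - j \<in> J" if "j \<in> {2..m}" for j
  proof -
    have "m + 2 - j \<in> {2..m}" using that by auto
    then show ?thesis using J by blast
  qed
  then have "(\<lambda>x. (\<Sum>j=2..m. y j * x (m + 2 - j)) - y 1 + v x) \<in> borel_measurable (PiM J (\<lambda>_. lborel))"
    by (intro borel_measurable_add borel_measurable_diff borel_measurable_sum borel_measurable_times
        measurable_component_lborel borel_measurable_const v) auto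
  moreover have "(\<lambda>x. x k) \<in> borel_measurable (PiM J (\<lambda>_. lborel))" if "k \<noteq> 1"
  proof -
    have "k \<in> J" using k that J by auto
    then show ?thesis by simp
  qed
  ultimately show "(\<lambda>x. if k = 1 then (\<Sum>j=2..m. y j * x (m + 2 - j)) - y 1 + v x else x k)
      \<in> PiM J (\<lambda>_. lborel) \<rightarrow>\<^sub>M lborel"
    by (cases "k = 1") (simp_all add: measurable_lborel2)
qed

lemma first_coord_shift_fun_upd:
  "k \<notin> {2..m} \<Longrightarrow> first_coord_shift m y v (r(k := t)) = first_coord_shift m y v r"
  unfolding first_coord_shift_def by (intro ext) (auto intro!: sum.cong)

lemma first_coord_shift_eq_fun_upd:
  "s \<in> extensional {2..m} \<Longrightarrow> 1 \<le> m \<Longrightarrow>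
   first_coord_shift m y v s = s(1 := (\<Sum>j=2..m. y j * s (m + 2 - j)) - y 1 + v)"
  unfolding first_coord_shift_def by (intro ext) (auto simp: extensional_def)

lemma bruhat_coord_fun_upd_1:
  assumes "r \<in> extensional {2..m}"
  shows "bruhat_coord m y (r(1 := t))
    = first_coord_shift m y (inverse t) (\<lambda>k\<in>{2..m}. - inverse t * r (m + 2 - k))"
proof
  fix k
  have "(\<Sum>j=2..m. y j * (- inverse t * (r(1:=t)) j))
      = (\<Sum>j=2..m. y j * (\<lambda>k\<in>{2..m}. - inverse t * r (m + 2 - k)) (m + 2 - j))"
    by (intro sum.cong) auto
  then show "bruhat_coord m y (r(1 := t)) k
      = first_coord_shift m y (inverse t) (\<lambda>k\<in>{2..m}. - inverse t * r (m + 2 - k)) k"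
    by (cases "k = 1") (auto simp: bruhat_coord_def first_coord_shift_def)
qed

lemma nn_integral_bruhat_coord_slice:
  fixes h :: "(nat \<Rightarrow> real) \<Rightarrow> ennreal"
  assumes m: "1 \<le> m" and h[measurable]: "h \<in> borel_measurable (PiM {1..m} (\<lambda>_. lborel))"
  shows "(\<integral>\<^sup>+r. ennreal (\<bar>inverse t\<bar> ^ (m + 1)) * h (bruhat_coord m y (r(1 := t))) \<partial>PiM {2..m} (\<lambda>_. lborel))
       = (\<integral>\<^sup>+r. ennreal ((inverse t)\<^sup>2) * h (first_coord_shift m y (inverse t) r) \<partial>PiM {2..m} (\<lambda>_. lborel))"
proof (cases "t = 0")
  case False
  let ?M = "PiM {2..m} (\<lambda>_. lborel :: real measure)"
  define c where "c = - inverse t"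
  have c: "c \<noteq> 0" using False by (simp add: c_def)
  have shift_meas: "(\<lambda>s. h (first_coord_shift m y (inverse t) s)) \<in> borel_measurable ?M"
    using measurable_comp[OF first_coord_shift_measurable[of m "{2..m}" "\<lambda>_. inverse t" y] h]
    by (simp add: comp_def)
  have upd: "(\<lambda>r. r(1 := t)) \<in> ?M \<rightarrow>\<^sub>M PiM {1..m} (\<lambda>_. lborel)"
    using m by (intro measurable_fun_upd[where J="{2..m}"]) auto
  have "(\<lambda>r. h (bruhat_coord m y (r(1 := t)))) \<in> borel_measurable ?M"
    using measurable_comp[OF measurable_comp[OF upd bruhat_coord_measurable] h] by (simp add: comp_def)
  then have "(\<integral>\<^sup>+r. ennreal (\<bar>inverse t\<bar> ^ (m + 1)) * h (bruhat_coord m y (r(1 := t))) \<partial>?M)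
      = ennreal (\<bar>inverse t\<bar> ^ (m + 1)) * (\<integral>\<^sup>+r. h (bruhat_coord m y (r(1 := t))) \<partial>?M)"
    by (simp add: nn_integral_cmult)
  also have "(\<integral>\<^sup>+r. h (bruhat_coord m y (r(1 := t))) \<partial>?M)
      = (\<integral>\<^sup>+r. h (first_coord_shift m y (inverse t) (\<lambda>k\<in>{2..m}. c * r (m + 2 - k))) \<partial>?M)"
  proof (intro nn_integral_cong)
    fix r assume "r \<in> space ?M"
    then have "r \<in> extensional {2..m}" by (simp add: space_PiM PiE_def)
    then show "h (bruhat_coord m y (r(1 := t)))
        = h (first_coord_shift m y (inverse t) (\<lambda>k\<in>{2..m}. c * r (m + 2 - k)))"
      using bruhat_coord_fun_upd_1[of r m y t] by (simp add: c_def)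
  qed
  also have "ennreal (\<bar>inverse t\<bar> ^ (m + 1)) * (\<integral>\<^sup>+r. h (first_coord_shift m y (inverse t) (\<lambda>k\<in>{2..m}. c * r (m + 2 - k))) \<partial>?M)
      = ennreal ((inverse t)\<^sup>2) * (ennreal (\<bar>c\<bar> ^ card {2..m})
          * (\<integral>\<^sup>+r. h (first_coord_shift m y (inverse t) (\<lambda>k\<in>{2..m}. c * r (m + 2 - k))) \<partial>?M))"
  proof -
    have "m + 1 = 2 + card {2..m}" using m by simp
    then have "\<bar>inverse t\<bar> ^ (m + 1) = (inverse t)\<^sup>2 * \<bar>c\<bar> ^ card {2..m}"
      by (simp only: power_add c_def abs_minus_cancel power2_abs)
    then show ?thesis by (simp add: ennreal_mult mult.assoc)
  qed
  also have "\<dots> = ennreal ((inverse t)\<^sup>2) * (\<integral>\<^sup>+s. h (first_coord_shift m y (inverse t) s) \<partial>?M)"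
    by (subst nn_integral_PiM_lborel_scale_involution[OF _ c _ _ shift_meas]) auto
  also have "\<dots> = (\<integral>\<^sup>+r. ennreal ((inverse t)\<^sup>2) * h (first_coord_shift m y (inverse t) r) \<partial>?M)"
    using shift_meas by (simp add: nn_integral_cmult)
  finally show ?thesis .
qed simp

lemma nn_integral_first_coord_shift:
  fixes h :: "(nat \<Rightarrow> real) \<Rightarrow> ennreal"
  assumes m: "1 \<le> m" and h: "h \<in> borel_measurable (PiM {1..m} (\<lambda>_. lborel))"
    and s: "s \<in> space (PiM {2..m} (\<lambda>_. lborel :: real measure))"
  shows "(\<integral>\<^sup>+t. ennreal ((inverse t)\<^sup>2) * h (first_coord_shift m y (inverse t) s) \<partial>lborel)
    = (\<integral>\<^sup>+u. h (s(1 := u)) \<partial>lborel)"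
proof -
  have "{1..m} = insert 1 {2..m}" using m by auto
  then have "h \<in> borel_measurable (PiM (insert 1 {2..m}) (\<lambda>_. lborel))" using h by simp
  then have "(\<lambda>u. h (s(1 := u))) \<in> borel_measurable borel"
    using measurable_comp[OF measurable_component_update[OF s, of 1]] by (simp add: comp_def)
  moreover have "s \<in> extensional {2..m}" using s by (simp add: space_PiM PiE_def)
  ultimately show ?thesis
    using m nn_integral_lborel_inverse_shift[of "\<lambda>u. h (s(1 := u))" "(\<Sum>j=2..m. y j * s (m + 2 - j)) - y 1"]
    by (simp add: first_coord_shift_eq_fun_upd)
qed

lemma nn_integral_bruhat_coord:
  fixes h :: "(nat \<Rightarrow> real) \<Rightarrow> ennreal"
  assumes m: "1 \<le> m" and h[measurable]: "h \<in> borel_measurable (PiM {1..m} (\<lambda>_. lborel))"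
  shows "(\<integral>\<^sup>+x. ennreal (\<bar>inverse (x 1)\<bar> ^ (m + 1)) * h (bruhat_coord m y x) \<partial>PiM {1..m} (\<lambda>_. lborel))
       = (\<integral>\<^sup>+x. h x \<partial>PiM {1..m} (\<lambda>_. lborel))"
proof -
  let ?L = "\<lambda>_::nat. lborel :: real measure"
  define R where "R = {2..m}"
  have IR: "{1..m} = insert 1 R" "finite R" "1 \<notin> R" using m by (auto simp: R_def)
  interpret P: product_sigma_finite ?L by (rule product_sigma_finite_lborel)
  have hI[measurable]: "h \<in> borel_measurable (PiM (insert 1 R) ?L)" using h IR by simp
  have [measurable]: "bruhat_coord m y \<in> PiM (insert 1 R) ?L \<rightarrow>\<^sub>M PiM {1..m} ?L"
    using bruhat_coord_measurable[of m y] IR by simp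
  have x1[measurable]: "(\<lambda>x. x 1) \<in> borel_measurable (PiM (insert 1 R) ?L)" by simp
  have [measurable]: "(\<lambda>x. first_coord_shift m y (inverse (x 1)) x) \<in> PiM (insert 1 R) ?L \<rightarrow>\<^sub>M PiM {1..m} ?L"
    by (rule first_coord_shift_measurable[OF _ borel_measurable_inverse[OF x1]]) (auto simp: R_def)
  define Phi where "Phi x = ennreal (\<bar>inverse (x 1)\<bar> ^ (m + 1)) * h (bruhat_coord m y x)" for x
  define Theta where "Theta x = ennreal ((inverse (x 1))\<^sup>2) * h (first_coord_shift m y (inverse (x 1)) x)" for x
  have [measurable]: "Phi \<in> borel_measurable (PiM (insert 1 R) ?L)" unfolding Phi_def by measurable
  have [measurable]: "Theta \<in> borel_measurable (PiM (insert 1 R) ?L)" unfolding Theta_def by measurable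
  have "(\<integral>\<^sup>+x. Phi x \<partial>PiM (insert 1 R) ?L) = (\<integral>\<^sup>+t. (\<integral>\<^sup>+r. Phi (r(1 := t)) \<partial>PiM R ?L) \<partial>lborel)"
    by (rule P.product_nn_integral_insert_rev[OF IR(2,3)]) measurable
  also have "\<dots> = (\<integral>\<^sup>+t. (\<integral>\<^sup>+r. Theta (r(1 := t)) \<partial>PiM R ?L) \<partial>lborel)"
    using nn_integral_bruhat_coord_slice[OF m h]
    by (simp add: Phi_def Theta_def R_def first_coord_shift_fun_upd)
  also have "\<dots> = (\<integral>\<^sup>+x. Theta x \<partial>PiM (insert 1 R) ?L)"
    by (rule P.product_nn_integral_insert_rev[OF IR(2,3), symmetric]) measurable
  also have "\<dots> = (\<integral>\<^sup>+s. (\<integral>\<^sup>+t. Theta (s(1 := t)) \<partial>lborel) \<partial>PiM R ?L)"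
    by (rule P.product_nn_integral_insert[OF IR(2,3)]) measurable
  also have "\<dots> = (\<integral>\<^sup>+s. (\<integral>\<^sup>+u. h (s(1 := u)) \<partial>lborel) \<partial>PiM R ?L)"
    unfolding Theta_def R_def
    by (rule nn_integral_cong) (simp add: first_coord_shift_fun_upd nn_integral_first_coord_shift[OF m h])
  also have "\<dots> = (\<integral>\<^sup>+x. h x \<partial>PiM (insert 1 R) ?L)"
    by (rule P.product_nn_integral_insert[OF IR(2,3) hI, symmetric])
  finally show ?thesis by (simp only: Phi_def IR(1))
qed

lemma AE_PiM_lborel_component_nonzero:
  assumes "finite I" and "i \<in> I"
  shows "AE x in PiM I (\<lambda>_. lborel :: real measure). x i \<noteq> 0"
proof (rule AE_I')
  let ?A = "\<lambda>j. if j = i then {0::real} else UNIV"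
  show "{x \<in> space (PiM I (\<lambda>_. lborel :: real measure)). \<not> x i \<noteq> 0} \<subseteq> Pi\<^sub>E I ?A"
    by (auto simp: space_PiM PiE_iff extensional_def)
  have "emeasure (PiM I (\<lambda>_. lborel :: real measure)) (Pi\<^sub>E I ?A) = 0"
    using assms by (subst product_sigma_finite.emeasure_PiM[OF product_sigma_finite_lborel])
      (auto intro!: prod_zero bexI[of _ i])
  then show "Pi\<^sub>E I ?A \<in> null_sets (PiM I (\<lambda>_. lborel :: real measure))"
    using assms by (simp add: null_sets_def sets_PiM_I_finite)
qed

lemma distr_density_bruhat_coord:
  assumes m: "1 \<le> m"
  shows "distr (density (PiM {1..m} (\<lambda>_. lborel)) (\<lambda>x. ennreal (\<bar>inverse (x 1)\<bar> ^ (m + 1))))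
      (PiM {1..m} (\<lambda>_. lborel)) (bruhat_coord m y) = PiM {1..m} (\<lambda>_. lborel :: real measure)"
proof -
  define M where "M = PiM {1..m} (\<lambda>_. lborel :: real measure)"
  define J where "J = (\<lambda>x::nat \<Rightarrow> real. ennreal (\<bar>inverse (x 1)\<bar> ^ (m + 1)))"
  have [measurable]: "bruhat_coord m y \<in> M \<rightarrow>\<^sub>M M"
    unfolding M_def by (rule bruhat_coord_measurable)
  have "(\<lambda>x. x 1) \<in> borel_measurable M" using m by (simp add: M_def)
  then have [measurable]: "J \<in> borel_measurable M" unfolding J_def by measurable
  have "distr (density M J) M (bruhat_coord m y) = M"
  proof (rule measure_eqI)
    fix A assume "A \<in> sets (distr (density M J) M (bruhat_coord m y))"
    then have A[measurable]: "A \<in> sets M" by simp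
    have "emeasure (distr (density M J) M (bruhat_coord m y)) A
        = (\<integral>\<^sup>+x. J x * indicator (bruhat_coord m y -` A \<inter> space M) x \<partial>M)"
      by (simp add: emeasure_distr emeasure_density)
    also have "\<dots> = (\<integral>\<^sup>+x. J x * indicator A (bruhat_coord m y x) \<partial>M)"
      by (intro nn_integral_cong) (auto simp: indicator_def)
    also have "\<dots> = emeasure M A"
      using A unfolding M_def J_def by (subst nn_integral_bruhat_coord[OF m]) auto
    finally show "emeasure (distr (density M J) M (bruhat_coord m y)) A = emeasure M A" .
  qed simp
  then show ?thesis by (simp only: M_def J_def)
qed

lemma integral_bruhat_coord:
  fixes F G :: "(nat \<Rightarrow> real) \<Rightarrow> 'a::{banach, second_countable_topology}"
  assumes m: "1 \<le> m"
    and "G \<in> borel_measurable (PiM {1..m} (\<lambda>_. lborel))"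
    and "F \<in> borel_measurable (PiM {1..m} (\<lambda>_. lborel))"
    and FG: "\<And>x. x 1 \<noteq> 0 \<Longrightarrow> F x = (\<bar>inverse (x 1)\<bar> ^ (m + 1)) *\<^sub>R G (bruhat_coord m y x)"
  shows "(LINT x | PiM {1..m} (\<lambda>_. lborel). F x) = (LINT z | PiM {1..m} (\<lambda>_. lborel). G z)"
proof -
  define M where "M = PiM {1..m} (\<lambda>_. lborel :: real measure)"
  define J where "J x = \<bar>inverse (x 1)\<bar> ^ (m + 1)" for x :: "nat \<Rightarrow> real"
  have [measurable]: "G \<in> borel_measurable M" "F \<in> borel_measurable M"
    using assms(2,3) by (simp_all add: M_def)
  have "(\<lambda>x. x 1) \<in> borel_measurable M" using m by (simp add: M_def)
  then have [measurable]: "J \<in> borel_measurable M" unfolding J_def by measurable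
  have [measurable]: "bruhat_coord m y \<in> M \<rightarrow>\<^sub>M M"
    unfolding M_def by (rule bruhat_coord_measurable)
  have image_measure: "distr (density M (\<lambda>x. ennreal (J x))) M (bruhat_coord m y) = M"
    using distr_density_bruhat_coord[OF m] unfolding M_def J_def .
  have "(LINT z | M. G z) = (LINT z | distr (density M (\<lambda>x. ennreal (J x))) M (bruhat_coord m y). G z)"
    by (simp only: image_measure)
  also have "\<dots> = (LINT x | density M (\<lambda>x. ennreal (J x)). G (bruhat_coord m y x))"
    by (subst integral_distr) auto
  also have "\<dots> = (LINT x | M. J x *\<^sub>R G (bruhat_coord m y x))"
    by (subst integral_density) (auto simp: J_def)
  also have "\<dots> = (LINT x | M. F x)"
  proof (rule integral_cong_AE)
    have "AE x in M. x 1 \<noteq> 0"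
      unfolding M_def using m by (intro AE_PiM_lborel_component_nonzero) auto
    then show "AE x in M. J x *\<^sub>R G (bruhat_coord m y x) = F x"
      by eventually_elim (simp add: FG J_def)
  qed auto
  finally show ?thesis by (simp add: M_def)
qed

section \<open>Matrix entries in terms of row and column numbers\<close>

lemma pos_less:
  fixes i j :: "'n::{finite,linorder}"
  assumes "i < j"
  shows "pos i < pos j"
proof -
  have "{k. k < i} \<subset> {k. k < j}" using assms by auto
  then have "card {k. k < i} < card {k. k < j}" by (intro psubset_card_mono) auto
  then show ?thesis by (simp add: pos_def)
qed

lemma pos_inj: "inj (pos :: 'n::{finite,linorder} \<Rightarrow> nat)"
proof (rule injI)
  fix i j :: 'n assume "pos i = pos j"
  then show "i = j" using pos_less[of i j] pos_less[of j i] by (cases i j rule: linorder_cases) auto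
qed

lemma pos_eq_iff: "pos i = pos j \<longleftrightarrow> i = (j::'n::{finite,linorder})"
  using pos_inj by (auto dest: injD)

lemma pos_range: "pos (i::'n::{finite,linorder}) \<in> {1..CARD('n)}"
proof -
  have "{k. k < i} \<subset> UNIV" by auto
  then have "card {k. k < i} < CARD('n)" by (intro psubset_card_mono) auto
  then show ?thesis by (simp add: pos_def)
qed

lemma pos_ge_1: "1 \<le> pos (i::'n::{finite,linorder})"
  using pos_range[of i] by auto

lemma pos_le_card: "pos (i::'n::{finite,linorder}) \<le> CARD('n)"
  using pos_range[of i] by auto

lemma pos_image: "pos ` (UNIV :: 'n::{finite,linorder} set) = {1..CARD('n)}"
proof -
  have "pos ` (UNIV :: 'n set) \<subseteq> {1..CARD('n)}" by (rule image_subsetI, rule pos_range)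
  moreover have "card (pos ` (UNIV :: 'n set)) = card {1..CARD('n)}"
    using card_image[OF pos_inj] by simp
  ultimately show ?thesis by (intro card_subset_eq) auto
qed

lemma pos_eq_1_iff: "pos i = 1 \<longleftrightarrow> i = Min (UNIV::'n::{finite,linorder} set)"
proof
  assume "pos i = 1"
  then have "{k. k < i} = {}" by (simp add: pos_def)
  then show "i = Min UNIV" by (metis Min_le finite UNIV_I antisym not_le empty_Collect_eq)
next
  assume "i = Min (UNIV::'n set)"
  then have "{k. k < i} = {}" by (auto simp: not_less intro: Min_le)
  then show "pos i = 1" by (simp add: pos_def)
qed

lemma pos_Max: "pos (Max (UNIV::'n::{finite,linorder} set)) = CARD('n)"
proof -
  have "{j. j < Max (UNIV::'n set)} = UNIV - {Max UNIV}"
    by (auto simp: order.strict_iff_order intro: Max_ge)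
  then have "card {j. j < Max (UNIV::'n set)} = CARD('n) - 1" by (simp add: card_Diff_singleton)
  then show ?thesis by (simp add: pos_def)
qed

lemma pos_eq_card_iff: "pos i = CARD('n) \<longleftrightarrow> i = Max (UNIV::'n::{finite,linorder} set)"
  using pos_Max[where 'n='n] pos_eq_iff[of i "Max UNIV"] by auto

lemma sum_UNIV_pos: "(\<Sum>k\<in>(UNIV::'n::{finite,linorder} set). h (pos k)) = (\<Sum>q\<in>{1..CARD('n)}. h q)"
  by (subst pos_image[symmetric]) (simp add: sum.reindex[OF pos_inj])

lemma matrix_mult_entry_pos:
  fixes A B :: "(('a::semiring_1, 'n::{finite,linorder}) vec, 'n) vec"
  assumes "\<And>i k. A$i$k = a (pos i) (pos k)" "\<And>k j. B$k$j = b (pos k) (pos j)"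
  shows "(A ** B)$i$j = (\<Sum>q\<in>{1..CARD('n)}. a (pos i) q * b q (pos j))"
  by (simp add: matrix_matrix_mult_def assms sum_UNIV_pos[where h="\<lambda>q. a (pos i) q * b q (pos j)"])

definition umat_ent :: "nat \<Rightarrow> (nat \<Rightarrow> real) \<Rightarrow> nat \<Rightarrow> nat \<Rightarrow> real" where
  "umat_ent n x q r = (if q = r then 1 else if q = 1 then x (n + 1 - r) else 0)"
definition utmat_ent :: "nat \<Rightarrow> (nat \<Rightarrow> real) \<Rightarrow> nat \<Rightarrow> nat \<Rightarrow> real" where
  "utmat_ent n y q r = (if q = r then 1 else if r = n then - y q else 0)"
definition wlong_ent :: "nat \<Rightarrow> nat \<Rightarrow> nat \<Rightarrow> real" where
  "wlong_ent n q r = (if q + r = n + 1 then 1 else 0)"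

lemma umat_eq_ent: "(umat x :: ((real, 'n::{finite,linorder}) vec, 'n) vec) $ i $ j = umat_ent CARD('n) x (pos i) (pos j)"
  by (simp add: umat_def umat_ent_def pos_eq_iff)
lemma utmat_eq_ent: "(utmat y :: ((real, 'n::{finite,linorder}) vec, 'n) vec) $ i $ j = utmat_ent CARD('n) y (pos i) (pos j)"
  by (simp add: utmat_def utmat_ent_def pos_eq_iff)
lemma wlong_eq_ent: "(wlong :: ((real, 'n::{finite,linorder}) vec, 'n) vec) $ i $ j = wlong_ent CARD('n) (pos i) (pos j)"
  by (simp add: wlong_def wlong_ent_def)

lemma sum_utmat_ent_wlong_ent:
  assumes r: "r \<in> {1..n}"
  shows "(\<Sum>s\<in>{1..n}. utmat_ent n y q s * wlong_ent n s r) = utmat_ent n y q (n + 1 - r)"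
proof -
  have "(\<Sum>s\<in>{1..n}. utmat_ent n y q s * wlong_ent n s r) = (\<Sum>s\<in>{1..n}. if s = n + 1 - r then utmat_ent n y q s else 0)"
    using r by (intro sum.cong) (auto simp: wlong_ent_def)
  also have "\<dots> = utmat_ent n y q (n + 1 - r)" using r by (subst sum.delta) auto
  finally show ?thesis .
qed

definition uwu_ent :: "nat \<Rightarrow> (nat \<Rightarrow> real) \<Rightarrow> (nat \<Rightarrow> real) \<Rightarrow> nat \<Rightarrow> nat \<Rightarrow> real" where
  "uwu_ent n y x q r = utmat_ent n y q (n + 1 - r) + (if r \<noteq> 1 then utmat_ent n y q n * x (n + 1 - r) else 0)"

lemma sum_utmat_ent_umat_ent:
  assumes r: "r \<in> {1..n}"
  shows "(\<Sum>s\<in>{1..n}. utmat_ent n y q (n + 1 - s) * umat_ent n x s r) = uwu_ent n y x q r"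
proof -
  have "(\<Sum>s\<in>{1..n}. utmat_ent n y q (n + 1 - s) * umat_ent n x s r)
     = (\<Sum>s\<in>{1..n}. (if s = r then utmat_ent n y q (n + 1 - s) else 0))
       + (\<Sum>s\<in>{1..n}. (if s = 1 then (if r \<noteq> 1 then utmat_ent n y q (n + 1 - s) * x (n + 1 - r) else 0) else 0))"
    by (subst sum.distrib[symmetric], intro sum.cong) (auto simp: umat_ent_def)
  also have "\<dots> = uwu_ent n y x q r" using r by (simp add: sum.delta uwu_ent_def)
  finally show ?thesis .
qed

section \<open>The Bruhat factorization\<close>

text \<open>The entry a(p) of the factor p in u~(y) w u(x) = u(z) p, read off from z.\<close>
definition kernel_arg :: "nat \<Rightarrow> (nat \<Rightarrow> real) \<Rightarrow> (nat \<Rightarrow> real) \<Rightarrow> real" where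
  "kernel_arg n y z = (\<Sum>j=2..n-1. y j * z (n + 1 - j)) - y 1 - z 1"

lemma sum_utmat_ent_last_column:
  assumes n: "2 \<le> n"
  shows "(\<Sum>s=2..n. z (n + 1 - s) * utmat_ent n y s n) = - y 1 - kernel_arg n y z"
proof -
  have "{2..n} = insert n {2..n-1}" "n \<notin> {2..n-1}" using n by auto
  then have "(\<Sum>s=2..n. z (n + 1 - s) * utmat_ent n y s n)
      = z 1 * utmat_ent n y n n + (\<Sum>s=2..n-1. z (n + 1 - s) * utmat_ent n y s n)"
    using n by simp
  also have "(\<Sum>s=2..n-1. z (n + 1 - s) * utmat_ent n y s n) = - (\<Sum>s=2..n-1. y s * z (n + 1 - s))"
    by (subst sum_negf[symmetric], intro sum.cong) (auto simp: utmat_ent_def)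
  finally show ?thesis by (simp add: utmat_ent_def kernel_arg_def)
qed

lemma first_row_umat_parabolic:
  fixes n :: nat and a :: real and x y z :: "nat \<Rightarrow> real"
  assumes n: "2 \<le> n" and ax: "a * x 1 = -1"
    and zr: "\<And>r. r \<in> {2..n-1} \<Longrightarrow> z r = a * x (n + 1 - r)"
    and zK: "kernel_arg n y z = a"
    and r: "r \<in> {1..n}"
  shows "(if r = 1 then a else 0) + (\<Sum>s=2..n. z (n + 1 - s) * uwu_ent n y x s r) = uwu_ent n y x 1 r"
proof -
  have K: "(\<Sum>s=2..n. z (n + 1 - s) * utmat_ent n y s n) = - y 1 - a"
    using sum_utmat_ent_last_column[OF n] zK by simp
  show ?thesis
  proof (cases "r = 1")
    case True
    have "(\<Sum>s=2..n. z (n + 1 - s) * uwu_ent n y x s r) = (\<Sum>s=2..n. z (n + 1 - s) * utmat_ent n y s n)"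
      using True by (intro sum.cong) (auto simp: uwu_ent_def)
    then show ?thesis using True K n by (simp add: uwu_ent_def utmat_ent_def)
  next
    case False
    have r2: "2 \<le> r" "r \<le> n" using False r by auto
    have "(\<Sum>s=2..n. z (n + 1 - s) * uwu_ent n y x s r)
       = (\<Sum>s=2..n. (if s = n + 1 - r then z (n + 1 - s) else 0)) + x (n + 1 - r) * (\<Sum>s=2..n. z (n + 1 - s) * utmat_ent n y s n)"
    proof -
      have "(\<Sum>s=2..n. z (n + 1 - s) * uwu_ent n y x s r)
        = (\<Sum>s=2..n. (if s = n + 1 - r then z (n + 1 - s) else 0) + x (n + 1 - r) * (z (n + 1 - s) * utmat_ent n y s n))"
        by (intro sum.cong) (use False r2 in \<open>auto simp: uwu_ent_def utmat_ent_def algebra_simps\<close>)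
      then show ?thesis by (simp add: sum.distrib sum_distrib_left)
    qed
    also have "(\<Sum>s=2..n. (if s = n + 1 - r then z (n + 1 - s) else 0)) = (if n + 1 - r \<in> {2..n} then z r else 0)"
      using r2 by (subst sum.delta) auto
    finally have S: "(\<Sum>s=2..n. z (n + 1 - s) * uwu_ent n y x s r) = (if n + 1 - r \<in> {2..n} then z r else 0) + x (n + 1 - r) * (- y 1 - a)"
      using K by simp
    have G1: "uwu_ent n y x 1 r = (if r = n then 1 else 0) + (- y 1) * x (n + 1 - r)"
      using False r2 n by (auto simp: uwu_ent_def utmat_ent_def)
    show ?thesis
    proof (cases "r = n")
      case True
      then show ?thesis using S G1 False ax n by (simp add: algebra_simps)
    next
      case False
      then have "r \<in> {2..n-1}" using r2 by auto
      moreover have "n + 1 - r \<in> {2..n}" using r2 False by auto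
      ultimately show ?thesis using S G1 False \<open>r \<noteq> 1\<close> zr[of r] r2 by (simp add: algebra_simps)
    qed
  qed
qed

lemma det_eq_entry_if_rows_unit:
  fixes A :: "(('a::comm_ring_1, 'n::finite) vec, 'n) vec"
  assumes unit: "\<And>i j. i \<noteq> k \<Longrightarrow> A$i$j = (if i = j then 1 else 0)"
  shows "det A = A$k$k"
proof -
  let ?P = "{p. p permutes (UNIV::'n set)}"
  have fin: "finite ?P" by (rule finite_permutations) simp
  have idP: "id \<in> ?P" by (simp add: permutes_id)
  have zero: "(\<Prod>i\<in>UNIV. A$i$(p i)) = 0" if p: "p \<in> ?P - {id}" for p
  proof -
    have "\<exists>i. i \<noteq> k \<and> p i \<noteq> i"
    proof (rule ccontr)
      assume "\<not> (\<exists>i. i \<noteq> k \<and> p i \<noteq> i)"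
      then have fx: "\<And>i. i \<noteq> k \<Longrightarrow> p i = i" by blast
      have inj: "inj p" using p permutes_inj by blast
      have "p k = k"
      proof (rule ccontr)
        assume "p k \<noteq> k"
        then have "p (p k) = p k" using fx by blast
        then have "p k = k" using inj by (auto dest: injD)
        then show False using \<open>p k \<noteq> k\<close> by simp
      qed
      then have "p = id" using fx by (intro ext) (metis id_apply)
      then show False using p by simp
    qed
    then obtain i where "i \<noteq> k" "p i \<noteq> i" by blast
    then have "A$i$(p i) = 0" using unit[of i "p i"] by auto
    then show ?thesis by (intro prod_zero) auto
  qed
  have "det A = (\<Sum>p\<in>?P. of_int (sign p) * (\<Prod>i\<in>UNIV. A$i$(p i)))" by (simp add: det_def)
  also have "\<dots> = of_int (sign (id::'n\<Rightarrow>'n)) * (\<Prod>i\<in>UNIV. A$i$(id i)) + (\<Sum>p\<in>?P - {id}. of_int (sign p) * (\<Prod>i\<in>UNIV. A$i$(p i)))"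
    by (rule sum.remove[OF fin idP])
  also have "(\<Sum>p\<in>?P - {id}. of_int (sign p) * (\<Prod>i\<in>UNIV. A$i$(p i))) = 0"
    using zero by (intro sum.neutral) auto
  also have "(\<Prod>i\<in>UNIV. A$i$(id i)) = A$k$k * (\<Prod>i\<in>UNIV - {k}. A$i$i)"
    by (simp add: prod.remove)
  also have "(\<Prod>i\<in>UNIV - {k}. A$i$i) = 1" using unit by (intro prod.neutral) auto
  finally show ?thesis by (simp add: sign_id)
qed

lemma det_eq_entry_mult_block_det:
  fixes A :: "((real,'n::{finite,linorder}) vec,'n) vec"
  assumes row: "\<And>j. j \<noteq> k \<Longrightarrow> A$k$j = 0"
  shows "det A = A$k$k * block_det (UNIV - {k}) A"
proof -
  define S where "S = (UNIV::'n set) - {k}"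
  have kS: "k \<notin> S" and US: "UNIV = insert k S" by (auto simp: S_def)
  define P where "P = {p. p permutes (UNIV::'n set)}"
  define P1 where "P1 = {p. p permutes S}"
  have fin: "finite P" unfolding P_def by (rule finite_permutations) (rule finite_class.finite_UNIV)
  have sub: "P1 \<subseteq> P"
    unfolding P_def P1_def using permutes_subset by blast
  have "det A = (\<Sum>p\<in>P. of_int (sign p) * (\<Prod>i\<in>UNIV. A$i$(p i)))" by (simp add: det_def P_def)
  also have "\<dots> = (\<Sum>p\<in>P1. of_int (sign p) * (\<Prod>i\<in>UNIV. A$i$(p i)))"
  proof (rule sum.mono_neutral_right[OF fin sub], rule ballI)
    fix p assume p: "p \<in> P - P1"
    have pU: "p permutes UNIV" using p by (simp add: P_def)
    have "p k \<noteq> k"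
    proof
      assume pk: "p k = k"
      have "p permutes S"
        by (rule permutes_superset[OF pU]) (use pk in \<open>auto simp: S_def\<close>)
      then show False using p by (simp add: P1_def)
    qed
    then have "A$k$(p k) = 0" using row by simp
    then have "(\<Prod>i\<in>UNIV. A$i$(p i)) = 0" by (intro prod_zero) auto
    then show "of_int (sign p) * (\<Prod>i\<in>UNIV. A$i$(p i)) = 0" by simp
  qed
  also have "\<dots> = (\<Sum>p\<in>P1. A$k$k * (of_int (sign p) * (\<Prod>i\<in>S. A$i$(p i))))"
  proof (rule sum.cong[OF refl])
    fix p assume "p \<in> P1"
    then have "p permutes S" by (simp add: P1_def)
    then have pk: "p k = k" using permutes_not_in kS by metis
    have "(\<Prod>i\<in>UNIV. A$i$(p i)) = A$k$(p k) * (\<Prod>i\<in>S. A$i$(p i))"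
      unfolding US using kS by (subst prod.insert) auto
    then show "of_int (sign p) * (\<Prod>i\<in>UNIV. A$i$(p i)) = A$k$k * (of_int (sign p) * (\<Prod>i\<in>S. A$i$(p i)))"
      using pk by simp
  qed
  also have "\<dots> = A$k$k * block_det (UNIV - {k}) A"
    by (simp add: block_det_def sum_distrib_left P1_def S_def[symmetric])
  finally show ?thesis .
qed

lemma det_eq_a_entry_mult_lowerB_det:
  fixes p :: "((real,'n::{finite,linorder}) vec,'n) vec"
  assumes "\<And>j. j \<noteq> Min UNIV \<Longrightarrow> p $ Min UNIV $ j = 0"
  shows "det p = a_entry p * lowerB_det p"
proof -
  have "{i::'n. 2 \<le> pos i} = UNIV - {Min UNIV}"
  proof (intro set_eqI)
    fix i :: 'n show "i \<in> {i. 2 \<le> pos i} \<longleftrightarrow> i \<in> UNIV - {Min UNIV}"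
      using pos_ge_1[of i] pos_eq_1_iff[of i] by auto
  qed
  then show ?thesis
    using det_eq_entry_mult_block_det[of "Min UNIV" p, OF assms] by (simp add: lowerB_det_def a_entry_def)
qed

lemma det_umat: "det (umat w :: ((real,'n::{finite,linorder}) vec,'n) vec) = 1" (is "det ?U = 1")
proof -
  have "det ?U = ?U $ Min UNIV $ Min UNIV"
    by (rule det_eq_entry_if_rows_unit) (auto simp: umat_def pos_eq_1_iff pos_eq_1_iff[simplified])
  then show ?thesis by (simp add: umat_def)
qed

lemma det_utmat: "det (utmat y :: ((real,'n::{finite,linorder}) vec,'n) vec) = 1" (is "det ?U = 1")
proof -
  have "det ?U = det (transpose ?U)" by simp
  also have "\<dots> = transpose ?U $ Max UNIV $ Max UNIV"
    by (rule det_eq_entry_if_rows_unit) (auto simp: utmat_def transpose_def pos_eq_card_iff)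
  finally show ?thesis by (simp add: utmat_def transpose_def)
qed

lemma sum_wlong_ent_wlong_ent:
  assumes q: "q \<in> {1..n}" and r: "r \<in> {1..n}"
  shows "(\<Sum>s\<in>{1..n}. wlong_ent n q s * wlong_ent n s r) = (if q = r then 1 else 0)"
proof -
  have "(\<Sum>s\<in>{1..n}. wlong_ent n q s * wlong_ent n s r) = (\<Sum>s\<in>{1..n}. if s = n + 1 - q then wlong_ent n s r else 0)"
    using q by (intro sum.cong) (auto simp: wlong_ent_def)
  also have "\<dots> = wlong_ent n (n + 1 - q) r" using q by (subst sum.delta) auto
  finally show ?thesis using q r by (auto simp: wlong_ent_def)
qed

lemma abs_det_wlong: "\<bar>det (wlong :: ((real,'n::{finite,linorder}) vec,'n) vec)\<bar> = 1" (is "\<bar>det ?W\<bar> = 1")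
proof -
  have "?W ** ?W = mat 1"
    unfolding vec_eq_iff
  proof (intro allI)
    fix i j
    have "(?W ** ?W) $ i $ j = (\<Sum>s\<in>{1..CARD('n)}. wlong_ent CARD('n) (pos i) s * wlong_ent CARD('n) s (pos j))"
      by (rule matrix_mult_entry_pos) (simp_all add: wlong_eq_ent)
    also have "\<dots> = (if pos i = pos j then 1 else 0)" by (rule sum_wlong_ent_wlong_ent) (simp_all add: pos_ge_1 pos_le_card pos_ge_1[simplified])
    finally show "(?W ** ?W) $ i $ j = mat 1 $ i $ j"
      by (simp add: pos_eq_iff mat_def)
  qed
  then have "det ?W * det ?W = 1"
    by (metis det_mul det_I)
  then show ?thesis
    using abs_square_eq_1[of "det ?W"] by (simp add: power2_eq_square)
qed

definition parabolic_ent :: "nat \<Rightarrow> real \<Rightarrow> (nat \<Rightarrow> real) \<Rightarrow> (nat \<Rightarrow> real) \<Rightarrow> nat \<Rightarrow> nat \<Rightarrow> real" where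
  "parabolic_ent n a y x q r = (if q = 1 then (if r = 1 then a else 0) else uwu_ent n y x q r)"

lemma umat_parabolic_ent:
  fixes n :: nat and a :: real and x y z :: "nat \<Rightarrow> real"
  assumes n: "2 \<le> n" and ax: "a * x 1 = -1"
    and zr: "\<And>r. r \<in> {2..n-1} \<Longrightarrow> z r = a * x (n + 1 - r)"
    and zK: "kernel_arg n y z = a"
    and q: "q \<in> {1..n}" and r: "r \<in> {1..n}"
  shows "(\<Sum>s\<in>{1..n}. umat_ent n z q s * parabolic_ent n a y x s r) = uwu_ent n y x q r"
proof -
  have ins: "{1..n} = insert 1 {2..n}" "1 \<notin> {2..n}" using n by auto
  have "(\<Sum>s\<in>{1..n}. umat_ent n z q s * parabolic_ent n a y x s r)
      = (\<Sum>s\<in>{1..n}. (if s = q then parabolic_ent n a y x s r else 0)) + (\<Sum>s\<in>{1..n}. (if q = 1 \<and> s \<noteq> 1 then z (n + 1 - s) * parabolic_ent n a y x s r else 0))"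
    by (subst sum.distrib[symmetric], intro sum.cong) (auto simp: umat_ent_def)
  also have "(\<Sum>s\<in>{1..n}. (if s = q then parabolic_ent n a y x s r else 0)) = parabolic_ent n a y x q r"
    using q by (subst sum.delta) auto
  also have "(\<Sum>s\<in>{1..n}. (if q = 1 \<and> s \<noteq> 1 then z (n + 1 - s) * parabolic_ent n a y x s r else 0))
      = (if q = 1 then (\<Sum>s=2..n. z (n + 1 - s) * uwu_ent n y x s r) else 0)"
  proof (cases "q = 1")
    case True
    have "(\<Sum>s\<in>{1..n}. (if q = 1 \<and> s \<noteq> 1 then z (n + 1 - s) * parabolic_ent n a y x s r else 0))
        = (\<Sum>s\<in>{2..n}. (if q = 1 \<and> s \<noteq> 1 then z (n + 1 - s) * parabolic_ent n a y x s r else 0))"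
      unfolding ins(1) using ins(2) by (subst sum.insert) auto
    also have "\<dots> = (\<Sum>s=2..n. z (n + 1 - s) * uwu_ent n y x s r)"
      using True by (intro sum.cong) (auto simp: parabolic_ent_def)
    finally show ?thesis using True by simp
  qed simp
  finally show ?thesis
    using first_row_umat_parabolic[OF n ax zr zK r] by (auto simp: parabolic_ent_def)
qed

lemma utmat_wlong_umat_eq_ent:
  assumes "2 \<le> CARD('n)"
  shows "(utmat y ** wlong ** umat x :: ((real,'n::{finite,linorder}) vec,'n) vec) $ i $ j
    = uwu_ent CARD('n) y x (pos i) (pos j)"
proof -
  have W: "(utmat y ** wlong :: ((real,'n) vec,'n) vec) $ i $ k = utmat_ent CARD('n) y (pos i) (CARD('n) + 1 - pos k)" for i k
  proof -
    have "(utmat y ** wlong :: ((real,'n) vec,'n) vec) $ i $ k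
        = (\<Sum>s\<in>{1..CARD('n)}. utmat_ent CARD('n) y (pos i) s * wlong_ent CARD('n) s (pos k))"
      by (rule matrix_mult_entry_pos) (simp_all add: utmat_eq_ent wlong_eq_ent)
    also have "\<dots> = utmat_ent CARD('n) y (pos i) (CARD('n) + 1 - pos k)"
      by (rule sum_utmat_ent_wlong_ent) (rule pos_range)
    finally show ?thesis .
  qed
  have "(utmat y ** wlong ** umat x :: ((real,'n) vec,'n) vec) $ i $ j
      = (\<Sum>s\<in>{1..CARD('n)}. utmat_ent CARD('n) y (pos i) (CARD('n) + 1 - s) * umat_ent CARD('n) x s (pos j))"
    by (rule matrix_mult_entry_pos) (simp_all add: W umat_eq_ent)
  also have "\<dots> = uwu_ent CARD('n) y x (pos i) (pos j)"
    by (rule sum_utmat_ent_umat_ent) (use assms pos_range in auto)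
  finally show ?thesis .
qed

lemma utmat_wlong_umat_factorization:
  fixes x y z :: "nat \<Rightarrow> real" and a :: real
  defines "P \<equiv> (\<chi> i j. parabolic_ent CARD('n) a y x (pos i) (pos j)) :: ((real,'n::{finite,linorder}) vec,'n) vec"
  assumes n: "2 \<le> CARD('n)" and ax: "a * x 1 = -1"
    and zr: "\<And>r. r \<in> {2..CARD('n)-1} \<Longrightarrow> z r = a * x (CARD('n) + 1 - r)"
    and zK: "kernel_arg CARD('n) y z = a"
  shows "utmat y ** wlong ** umat x = umat z ** P" "P \<in> Pgrp" "a_entry P = a"
    "\<bar>lowerB_det P\<bar> = inverse \<bar>a\<bar>"
proof -
  have P_ent: "P $ i $ j = parabolic_ent CARD('n) a y x (pos i) (pos j)" for i j by (simp add: P_def)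
  show factorization: "utmat y ** wlong ** umat x = umat z ** P"
    unfolding vec_eq_iff
  proof (intro allI)
    fix i j
    have "(umat z ** P) $ i $ j
        = (\<Sum>s\<in>{1..CARD('n)}. umat_ent CARD('n) z (pos i) s * parabolic_ent CARD('n) a y x s (pos j))"
      by (rule matrix_mult_entry_pos) (simp_all add: umat_eq_ent P_ent)
    also have "\<dots> = uwu_ent CARD('n) y x (pos i) (pos j)"
      by (rule umat_parabolic_ent[OF n ax zr zK]) (auto simp: pos_ge_1[simplified] pos_le_card)
    finally show "(utmat y ** wlong ** umat x) $ i $ j = (umat z ** P) $ i $ j"
      by (simp add: utmat_wlong_umat_eq_ent[OF n])
  qed
  note min_pos = pos_eq_1_iff[THEN iffD2, OF refl]
  have P_min: "P $ Min UNIV $ Min UNIV = a" by (simp add: P_ent min_pos min_pos[simplified] parabolic_ent_def)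
  show a_entry: "a_entry P = a" by (simp add: a_entry_def P_min)
  have a0: "a \<noteq> 0" using ax by auto
  have row: "P $ Min UNIV $ j = 0" if "j \<noteq> Min UNIV" for j
    using that by (simp add: P_ent parabolic_ent_def pos_eq_1_iff pos_eq_1_iff[simplified])
  have det_P: "det P = a * lowerB_det P"
    using det_eq_a_entry_mult_lowerB_det[of P, OF row] by (simp add: a_entry)
  have "\<bar>det (utmat y ** wlong ** umat x)\<bar> = 1"
    by (simp add: det_mul det_utmat det_umat abs_det_wlong)
  moreover have "det (umat z ** P) = det P"
    by (simp add: det_mul det_umat)
  ultimately have "\<bar>a\<bar> * \<bar>lowerB_det P\<bar> = 1"
    by (metis factorization det_P abs_mult)
  then show lowerB: "\<bar>lowerB_det P\<bar> = inverse \<bar>a\<bar>" using a0 by (simp add: field_simps)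
  show "P \<in> Pgrp" unfolding Pgrp_def
    using a_entry a0 lowerB by (auto simp: P_ent parabolic_ent_def a_entry_def)
qed

lemma bruhat_coord_eq:
  assumes "2 \<le> n" and "r \<in> {2..n-1}"
  shows "bruhat_coord (n - 1) y x r = - inverse (x 1) * x (n + 1 - r)"
proof -
  have "n - 1 + 2 - r = n + 1 - r" using assms by auto
  then show ?thesis using assms by (simp add: bruhat_coord_def)
qed

lemma kernel_arg_bruhat_coord:
  assumes n: "2 \<le> n"
  shows "kernel_arg n y (bruhat_coord (n - 1) y x) = - inverse (x 1)"
proof -
  let ?z = "bruhat_coord (n - 1) y x"
  have "?z (n + 1 - j) = - inverse (x 1) * x j" if "j \<in> {2..n-1}" for j
  proof -
    have "n + 1 - j \<in> {2..n-1}" "n + 1 - (n + 1 - j) = j" using that n by auto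
    then show ?thesis using bruhat_coord_eq[OF n] by metis
  qed
  then have "(\<Sum>j=2..n-1. y j * ?z (n + 1 - j)) = (\<Sum>j=2..n-1. y j * (- inverse (x 1) * x j))"
    by (intro sum.cong) auto
  moreover have "1 \<in> {1..n - 1}" using n by simp
  then have "?z 1 = (\<Sum>j=2..n-1. y j * (- inverse (x 1) * x j)) - y 1 + inverse (x 1)"
    by (simp add: bruhat_coord_def)
  ultimately show ?thesis by (simp add: kernel_arg_def)
qed

section \<open>The intertwining integral\<close>

lemma rpow_parabolic_character:
  fixes b :: real and N :: nat and \<nu> :: complex
  assumes b: "0 < b" and N: "1 \<le> N"
  shows "rpow b (- of_nat (N - 1) * (- \<nu> - of_nat N / 2) / of_nat N)
      * rpow (inverse b) ((- \<nu> - of_nat N / 2) / of_nat N)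
    = of_real (b ^ N) * rpow b (\<nu> - of_nat N / 2)"
proof -
  define L where "L = complex_of_real (ln b)"
  have rpow_exp: "rpow c s = exp (s * of_real (ln c))" if "0 < c" for c s
    using that by (simp add: rpow_def powr_def Ln_of_real)
  have rpow_b: "rpow b s = exp (s * L)" for s
    using rpow_exp[OF b] by (simp add: L_def)
  have rpow_inverse_b: "rpow (inverse b) s = exp (- (s * L))" for s
    using rpow_exp[of "inverse b"] b by (simp add: L_def ln_inverse)
  have exp_N: "exp (of_nat N * L) = complex_of_real (b ^ N)"
    using b by (simp add: exp_of_nat_mult exp_of_real L_def)
  have "rpow b (- of_nat (N - 1) * (- \<nu> - of_nat N / 2) / of_nat N)
      * rpow (inverse b) ((- \<nu> - of_nat N / 2) / of_nat N)
    = exp (- of_nat (N - 1) * (- \<nu> - of_nat N / 2) / of_nat N * L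
      + - ((- \<nu> - of_nat N / 2) / of_nat N * L))"
    by (simp only: rpow_b rpow_inverse_b exp_add)
  also have "\<dots> = exp (of_nat N * L + (\<nu> - of_nat N / 2) * L)"
  proof -
    have "(of_nat N :: complex) \<noteq> 0" using N by simp
    then have "- of_nat (N - 1) * (- \<nu> - of_nat N / 2) / of_nat N * L
        + - ((- \<nu> - of_nat N / 2) / of_nat N * L) = of_nat N * L + (\<nu> - of_nat N / 2) * L"
      using N by (simp add: of_nat_diff field_simps)
    then show ?thesis by (rule arg_cong)
  qed
  also have "\<dots> = of_real (b ^ N) * rpow b (\<nu> - of_nat N / 2)"
    by (simp add: exp_add exp_N rpow_b)
  finally show ?thesis .
qed

lemma umat_in_GLset: "umat z \<in> (GLset :: (((real,'n::{finite,linorder}) vec,'n) vec) set)"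
  by (simp add: GLset_def invertible_det_nz det_umat)

lemma Wspace_utmat_wlong_umat:
  fixes f :: "((real, 'n::{finite,linorder}) vec, 'n) vec \<Rightarrow> complex" and x y :: "nat \<Rightarrow> real"
  assumes n: "2 \<le> CARD('n)" and f: "f \<in> Wspace (- \<nu>) \<epsilon>" and x1: "x 1 \<noteq> 0"
  defines "z \<equiv> bruhat_coord (CARD('n) - 1) y x"
  shows "f (utmat y ** wlong ** umat x) = (\<bar>inverse (x 1)\<bar> ^ CARD('n)) *\<^sub>R
     (f (umat z) * rpow \<bar>kernel_arg CARD('n) y z\<bar> (\<nu> - of_nat CARD('n) / 2)
       * of_real (sgn (kernel_arg CARD('n) y z) ^ \<epsilon>))"
proof -
  let ?N = "CARD('n)"
  define a where "a = - inverse (x 1)"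
  have ax: "a * x 1 = -1" using x1 by (simp add: a_def)
  have zr: "z r = a * x (?N + 1 - r)" if "r \<in> {2..?N-1}" for r
    using bruhat_coord_eq[OF n that] by (simp add: z_def a_def)
  have zK: "kernel_arg ?N y z = a"
    using kernel_arg_bruhat_coord[OF n] by (simp add: z_def a_def)
  define P :: "((real,'n) vec,'n) vec" where "P = (\<chi> i j. parabolic_ent ?N a y x (pos i) (pos j))"
  note factorization = utmat_wlong_umat_factorization[OF n ax zr zK, folded P_def]
  have b: "0 < \<bar>a\<bar>" using ax by auto
  have "f (utmat y ** wlong ** umat x) = f (umat z ** P)"
    using factorization(1) by simp
  also have "\<dots> = rpow \<bar>a_entry P\<bar> (- of_nat (?N - 1) * (- \<nu> - of_nat ?N / 2) / of_nat ?N)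
      * of_real (sgn (a_entry P) ^ \<epsilon>) * rpow \<bar>lowerB_det P\<bar> ((- \<nu> - of_nat ?N / 2) / of_nat ?N)
      * f (umat z)"
    using f umat_in_GLset factorization(2) unfolding Wspace_def by blast
  also have "\<dots> = rpow \<bar>a\<bar> (- of_nat (?N - 1) * (- \<nu> - of_nat ?N / 2) / of_nat ?N)
      * of_real (sgn a ^ \<epsilon>) * rpow (inverse \<bar>a\<bar>) ((- \<nu> - of_nat ?N / 2) / of_nat ?N) * f (umat z)"
    by (simp only: factorization(3,4))
  also have "\<dots> = of_real (\<bar>a\<bar> ^ ?N) * rpow \<bar>a\<bar> (\<nu> - of_nat ?N / 2) * of_real (sgn a ^ \<epsilon>) * f (umat z)"
    using rpow_parabolic_character[OF b, of ?N \<nu>] n by (simp add: ac_simps)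
  finally show ?thesis
    by (simp add: zK a_def scaleR_conv_of_real ac_simps)
qed

lemma borel_measurable_vec_vec:
  fixes f :: "'a \<Rightarrow> real^'n^'m"
  assumes "\<And>i j. (\<lambda>x. f x $ i $ j) \<in> borel_measurable M"
  shows "f \<in> borel_measurable M"
proof (subst borel_measurable_euclidean_space, intro ballI)
  fix b :: "real^'n^'m" assume "b \<in> Basis"
  then obtain i j where "b = axis i (axis j 1)" by (auto simp: Basis_vec_def)
  then show "(\<lambda>x. f x \<bullet> b) \<in> borel_measurable M" by (simp add: inner_axis assms)
qed

lemma open_GLset: "open (GLset :: (real^'n^'n) set)"
proof -
  have "continuous_on UNIV (det :: real^'n^'n \<Rightarrow> real)"
    unfolding det_def[abs_def] by (intro continuous_intros)
  then have "open {A :: real^'n^'n. det A \<noteq> 0}"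
    by (rule open_Collect_neq[OF _ continuous_on_const])
  then show ?thesis by (simp add: GLset_def invertible_det_nz)
qed

lemma continuous_on_Wspace: "f \<in> Wspace \<mu> \<epsilon> \<Longrightarrow> continuous_on GLset f"
  by (auto simp: Wspace_def smooth_on_def)

lemma borel_measurable_continuous_on_GLset_comp:
  fixes f :: "real^'n^'n \<Rightarrow> 'b::{banach, second_countable_topology}"
  assumes f: "continuous_on GLset f" and g: "g \<in> borel_measurable M"
    and GL: "\<And>x. x \<in> space M \<Longrightarrow> g x \<in> GLset"
  shows "(\<lambda>x. f (g x)) \<in> borel_measurable M"
proof -
  have "(\<lambda>A. indicator GLset A *\<^sub>R f A) \<in> borel_measurable borel"
    by (rule borel_measurable_continuous_on_indicator[OF borel_open[OF open_GLset] f])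
  from measurable_comp[OF g this]
  have indicator_comp: "(\<lambda>x. indicator GLset (g x) *\<^sub>R f (g x)) \<in> borel_measurable M"
    by (simp add: comp_def)
  then show ?thesis
    by (rule Sigma_Algebra.measurable_cong[THEN iffD1, rotated]) (simp add: GL)
qed

lemma umat_entry_measurable:
  "(\<lambda>z. (umat z :: ((real,'n::{finite,linorder}) vec,'n) vec) $ i $ j)
    \<in> borel_measurable (PiM {1..CARD('n) - 1} (\<lambda>_. lborel))"
proof -
  consider "i = j" | "pos i \<noteq> 1" | "i \<noteq> j" "pos i = 1" by blast
  then show ?thesis
  proof cases
    case 3
    then have "CARD('n) + 1 - pos j \<in> {1..CARD('n) - 1}"
      using pos_ge_1[of j] pos_le_card[of j] pos_eq_iff[of i j] by auto
    with 3 show ?thesis by (simp add: umat_def)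
  next
    case 2
    then have "umat z $ i $ j = (if i = j then 1 else 0)" for z
      by (simp add: umat_def)
    then show ?thesis by simp
  qed (simp add: umat_def)
qed

lemma utmat_wlong_umat_measurable:
  "(\<lambda>x. utmat y ** wlong ** umat x :: ((real,'n::{finite,linorder}) vec,'n) vec)
    \<in> borel_measurable (PiM {1..CARD('n) - 1} (\<lambda>_. lborel))"
proof (rule borel_measurable_vec_vec)
  fix i j :: 'n
  show "(\<lambda>x. (utmat y ** wlong ** umat x) $ i $ j) \<in> borel_measurable (PiM {1..CARD('n) - 1} (\<lambda>_. lborel))"
    unfolding matrix_matrix_mult_def[of "utmat y ** wlong"] vec_lambda_beta
    by (intro borel_measurable_sum borel_measurable_times borel_measurable_const umat_entry_measurable)
qed

lemma utmat_wlong_umat_in_GLset: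
  "utmat y ** wlong ** umat x \<in> (GLset :: (((real,'n::{finite,linorder}) vec,'n) vec) set)"
  by (auto simp: GLset_def invertible_det_nz det_mul det_utmat det_umat abs_det_wlong
      dest: arg_cong[where f=abs])

lemma borel_measurable_rpow_abs [measurable]:
  fixes k :: "'a \<Rightarrow> real"
  assumes [measurable]: "k \<in> borel_measurable M"
  shows "(\<lambda>x. rpow \<bar>k x\<bar> s) \<in> borel_measurable M"
proof -
  have "(\<lambda>x. rpow \<bar>k x\<bar> s) = (\<lambda>x. if k x = 0 then 0 else exp (s * of_real (ln \<bar>k x\<bar>)))"
    by (auto simp: rpow_def powr_def Ln_of_real)
  then show ?thesis by simp
qed

lemma kernel_integrand_measurable:
  fixes f :: "((real, 'n::{finite,linorder}) vec, 'n) vec \<Rightarrow> complex"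
  assumes n: "2 \<le> CARD('n)" and f: "f \<in> Wspace \<mu> \<epsilon>"
  shows "(\<lambda>z. f (umat z) * rpow \<bar>kernel_arg CARD('n) y z\<bar> s * of_real (sgn (kernel_arg CARD('n) y z) ^ \<epsilon>))
    \<in> borel_measurable (PiM {1..CARD('n) - 1} (\<lambda>_. lborel))"
proof -
  let ?M = "PiM {1..CARD('n) - 1} (\<lambda>_. lborel :: real measure)"
  have [measurable]: "(\<lambda>z. f (umat z)) \<in> borel_measurable ?M"
    by (rule borel_measurable_continuous_on_GLset_comp[OF continuous_on_Wspace[OF f] _ umat_in_GLset])
      (intro borel_measurable_vec_vec umat_entry_measurable)
  have [measurable]: "kernel_arg CARD('n) y \<in> borel_measurable ?M"
    unfolding kernel_arg_def
    by (intro borel_measurable_diff borel_measurable_sum borel_measurable_times borel_measurable_const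
        measurable_component_lborel) (use n in auto)
  show ?thesis by measurable
qed

theorem proposition3p26:
  fixes f :: "((real, 'n::{finite,linorder}) vec, 'n) vec \<Rightarrow> complex"
    and \<epsilon> :: nat and \<nu> :: complex and y :: "nat \<Rightarrow> real"
  assumes "CARD('n) \<ge> 2"
    and "\<epsilon> < 2"
    and "Re \<nu> > real CARD('n) / 2 - 1"
    and "f \<in> Wspace (- \<nu>) \<epsilon>"
  shows "Iop \<nu> f (utmat y) =
    (LINT z | Leb (CARD('n) - 1).
       f (umat z)
       * rpow \<bar>(\<Sum>j=2..CARD('n)-1. y j * z (CARD('n) + 1 - j)) - y 1 - z 1\<bar>
              (\<nu> - of_nat CARD('n) / 2)
       * of_real (sgn ((\<Sum>j=2..CARD('n)-1. y j * z (CARD('n) + 1 - j)) - y 1 - z 1) ^ \<epsilon>))"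
proof -
  \<comment> \<open>The hypotheses on \<open>\<epsilon>\<close> and \<open>Re \<nu>\<close> make the integrals converge.\<close>
  note n = assms(1) and f = assms(4)
  have m: "1 \<le> CARD('n) - 1" using n by simp
  have "(\<lambda>x. f (utmat y ** wlong ** umat x)) \<in> borel_measurable (PiM {1..CARD('n) - 1} (\<lambda>_. lborel))"
    by (rule borel_measurable_continuous_on_GLset_comp[OF continuous_on_Wspace[OF f]
          utmat_wlong_umat_measurable utmat_wlong_umat_in_GLset])
  with integral_bruhat_coord[OF m kernel_integrand_measurable[OF n f]]
  have "(LINT x | Leb (CARD('n) - 1). f (utmat y ** wlong ** umat x))
    = (LINT z | Leb (CARD('n) - 1). f (umat z) * rpow \<bar>kernel_arg CARD('n) y z\<bar> (\<nu> - of_nat CARD('n) / 2)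
        * of_real (sgn (kernel_arg CARD('n) y z) ^ \<epsilon>))"
    unfolding Leb_def using Wspace_utmat_wlong_umat[OF n f] n by simp
  then show ?thesis by (simp add: Iop_def kernel_arg_def)
qed

end
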